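(* Let $p\in\mathbb{C}\setminus\{0\}$. The assignment $$\Delta(H)=H\otimes\mathbb{I}+\mathbb{I}\otimes H,\quad \Delta(E)=E\otimes\mathbb{I}+\mathbb{I}\otimes E,\quad \Delta(F)=p\,F\otimes\mathbb{I}+(1-p)\,\mathbb{I}\otimes F$$ extends to an algebra homomorphism from the oscillator algebra $osc$ to $osc\otimes osc$. Moreover, for all $\lambda_1,\lambda_2\in\mathbb{C}$ and all integers $0\le k\le N$, the vectors $w_{k,N}=\sum_{n=0}^N K_n(k,N)\,|\lambda_1,n\rangle\otimes|\lambda_2,N-n\rangle$ in $V_{\lambda_1}\otimes V_{\lambda_2}$ satisfy $\Delta(H)w_{k,N}=(\lambda_1+\lambda_2+2N)w_{k,N}$, $\Delta(E)w_{k,N}=w_{k,N+1}$ and $\Delta(F)w_{k,N}=-(N-k)\,w_{k,N-1}$ (with $w_{k,k-1}=0$); i.e. the $K_n(k,N)$ are the Clebsch–Gordan coefficients for this coproduct.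
   Context: The oscillator algebra $osc$ is generated by $H,E,F$ with relations $[H,E]=2E$, $[H,F]=-2F$, $[E,F]=1$. For $\lambda\in\mathbb{C}$, $V_\lambda$ is the $osc$-module with basis $\{|\lambda,n\rangle: n\ge 0\}$ and action $H|\lambda,n\rangle=(\lambda+2n)|\lambda,n\rangle$, $E|\lambda,n\rangle=|\lambda,n+1\rangle$, $F|\lambda,n\rangle=-n|\lambda,n-1\rangle$. The functions $K_n(k,N)$ (proportional to Krawtchouk polynomials) are $$K_n(k,N)=\binom{N}{n}\,{}_2F_1\!\left(\begin{matrix}-n,\ -k\\ -N\end{matrix}\;\Big|\;p^{-1}\right)=\binom{N}{n}\sum_{j=0}^{\min(n,k)}\frac{(-n)_j(-k)_j}{j!\,(-N)_j}p^{-j},$$ with $(a)_j=a(a+1)\cdots(a+j-1)$. *)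

theory Defs
  imports Complex_Main
begin

definition osc_rel :: "'b::ring_1 \<Rightarrow> 'b \<Rightarrow> 'b \<Rightarrow> bool" where
  "osc_rel H E F \<longleftrightarrow>
     H * E - E * H = 2 * E \<and> H * F - F * H = - 2 * F \<and> E * F - F * E = 1"

definition cplx_alg :: "(complex \<Rightarrow> 'b::ring_1) \<Rightarrow> bool" where
  "cplx_alg emb \<longleftrightarrow> emb 0 = 0 \<and> emb 1 = 1 \<and>
     (\<forall>a b. emb (a + b) = emb a + emb b) \<and> (\<forall>a b. emb (a * b) = emb a * emb b) \<and>
     (\<forall>a x. emb a * x = x * emb a)"

text \<open>Two mutually commuting copies of osc (as in osc \<otimes> osc: X \<otimes> 1 and 1 \<otimes> Y).\<close>
definition commute_all :: "'b::ring_1 list \<Rightarrow> 'b list \<Rightarrow> bool" where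
  "commute_all xs ys \<longleftrightarrow> (\<forall>x\<in>set xs. \<forall>y\<in>set ys. x * y = y * x)"

text \<open>The module V_lambda: vectors are coefficient functions w.r.t. the basis |lambda,n>.\<close>
definition oscH :: "complex \<Rightarrow> (nat \<Rightarrow> complex) \<Rightarrow> nat \<Rightarrow> complex" where
  "oscH lam f n = (lam + 2 * of_nat n) * f n"
definition oscE :: "(nat \<Rightarrow> complex) \<Rightarrow> nat \<Rightarrow> complex" where
  "oscE f n = (if n = 0 then 0 else f (n - 1))"      (* E|n> = |n+1> *)
definition oscF :: "(nat \<Rightarrow> complex) \<Rightarrow> nat \<Rightarrow> complex" where
  "oscF f n = - of_nat (n + 1) * f (n + 1)"          (* F|n> = -n|n-1> *)

text \<open>Tensor product V_l1 \<otimes> V_l2: coefficient functions w.r.t. |l1,n> \<otimes> |l2,m>.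
  T \<otimes> I and I \<otimes> T.\<close>
definition tens_left :: "((nat \<Rightarrow> complex) \<Rightarrow> nat \<Rightarrow> complex) \<Rightarrow> (nat \<times> nat \<Rightarrow> complex) \<Rightarrow> nat \<times> nat \<Rightarrow> complex" where
  "tens_left T v = (\<lambda>(n, m). T (\<lambda>n'. v (n', m)) n)"
definition tens_right :: "((nat \<Rightarrow> complex) \<Rightarrow> nat \<Rightarrow> complex) \<Rightarrow> (nat \<times> nat \<Rightarrow> complex) \<Rightarrow> nat \<times> nat \<Rightarrow> complex" where
  "tens_right T v = (\<lambda>(n, m). T (\<lambda>m'. v (n, m')) m)"

definition DeltaH :: "complex \<Rightarrow> complex \<Rightarrow> (nat \<times> nat \<Rightarrow> complex) \<Rightarrow> nat \<times> nat \<Rightarrow> complex" where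
  "DeltaH l1 l2 v = (\<lambda>x. tens_left (oscH l1) v x + tens_right (oscH l2) v x)"
definition DeltaE :: "(nat \<times> nat \<Rightarrow> complex) \<Rightarrow> nat \<times> nat \<Rightarrow> complex" where
  "DeltaE v = (\<lambda>x. tens_left oscE v x + tens_right oscE v x)"
definition DeltaF :: "complex \<Rightarrow> (nat \<times> nat \<Rightarrow> complex) \<Rightarrow> nat \<times> nat \<Rightarrow> complex" where
  "DeltaF p v = (\<lambda>x. p * tens_left oscF v x + (1 - p) * tens_right oscF v x)"

text \<open>K_n(k,N) = binom(N,n) 2F1(-n,-k;-N;1/p).\<close>
definition Kraw :: "complex \<Rightarrow> nat \<Rightarrow> nat \<Rightarrow> nat \<Rightarrow> complex" where
  "Kraw p n k N = of_nat (N choose n) *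
     (\<Sum>j\<le>min n k. pochhammer (- of_nat n) j * pochhammer (- of_nat k) j
        / (fact j * pochhammer (- of_nat N) j) * inverse p ^ j)"

definition wvec :: "complex \<Rightarrow> nat \<Rightarrow> nat \<Rightarrow> nat \<times> nat \<Rightarrow> complex" where
  "wvec p k N = (\<lambda>(n, m). if n \<le> N \<and> m = N - n then Kraw p n k N else 0)"

end

theory Submission
  imports Defs "HOL-Computational_Algebra.Polynomial"
begin

text \<open>The coproduct is a homomorphism because the two tensor factors commute and the
  coefficients of \<open>\<Delta>(F)\<close> sum to \<open>p + (1 - p) = 1\<close>, so the commutation relations add up.

  For the Clebsch-Gordan part, encode a vector \<open>\<Sum>\<^sub>n c\<^sub>n |\<lambda>\<^sub>1,n\<rangle> \<otimes> |\<lambda>\<^sub>2,N-n\<rangle>\<close> by its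
  generating polynomial \<open>G(x) = \<Sum>\<^sub>n c\<^sub>n x^n\<close>. Then \<open>\<Delta>(H)\<close> acts as the scalar
  \<open>\<lambda>\<^sub>1 + \<lambda>\<^sub>2 + 2N\<close>, \<open>\<Delta>(E)\<close> as multiplication by \<open>1 + x\<close>, and \<open>\<Delta>(F)\<close> as the
  differential operator \<open>p G' + (1 - p)(N G - x G')\<close>, landing in degree \<open>N - 1\<close>.
  The generating polynomial of the \<open>K\<^sub>n(k,N)\<close> is \<open>(1 + x)^(N-k) (1 + (1 - 1/p) x)^k\<close>;
  multiplying it by \<open>1 + x\<close> raises \<open>N\<close> by one, and the differential operator maps it to
  \<open>N - k\<close> times the polynomial for \<open>N - 1\<close>.\<close>

definition commutator :: "'a::ring \<Rightarrow> 'a \<Rightarrow> 'a" where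
  "commutator x y = x * y - y * x"

lemma commutator_add_left: "commutator (a + b) c = commutator a c + commutator b c"
  by (simp add: commutator_def algebra_simps)

lemma commutator_add_right: "commutator a (b + c) = commutator a b + commutator a c"
  by (simp add: commutator_def algebra_simps)

lemma commutator_mult_right_commuting:
  "c * a = a * c \<Longrightarrow> commutator a (c * b) = c * commutator a b"
  by (simp add: commutator_def right_diff_distrib flip: mult.assoc)

lemma commutator_eq_0_iff: "commutator a b = 0 \<longleftrightarrow> a * b = b * a"
  by (simp add: commutator_def)

lemma osc_rel_iff_commutator:
  "osc_rel H E F \<longleftrightarrow> commutator H E = 2 * E \<and> commutator H F = - 2 * F \<and> commutator E F = 1"
  by (simp add: osc_rel_def commutator_def)

lemma osc_rel_coproduct:
  fixes a b :: "'a::ring_1"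
  assumes rel1: "osc_rel H1 E1 F1" and rel2: "osc_rel H2 E2 F2"
    and commute: "commute_all [H1, E1, F1] [H2, E2, F2]"
    and a_central: "\<And>x. a * x = x * a" and b_central: "\<And>x. b * x = x * b"
    and "a + b = 1"
  shows "osc_rel (H1 + H2) (E1 + E2) (a * F1 + b * F2)"
proof -
  have cross: "commutator H1 E2 = 0" "commutator H2 E1 = 0" "commutator H1 F2 = 0"
      "commutator H2 F1 = 0" "commutator E1 F2 = 0" "commutator E2 F1 = 0"
    using commute by (auto simp: commute_all_def commutator_eq_0_iff)
  note rel = rel1[unfolded osc_rel_iff_commutator] rel2[unfolded osc_rel_iff_commutator]
  have scale: "commutator X (a * Y) = a * commutator X Y" "commutator X (b * Y) = b * commutator X Y"
    for X Y
    by (rule commutator_mult_right_commuting[OF a_central] commutator_mult_right_commuting[OF b_central])+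
  note bracket = commutator_add_left commutator_add_right scale cross rel
  have "commutator (H1 + H2) (E1 + E2) = 2 * (E1 + E2)"
    by (simp add: bracket distrib_left)
  moreover have "commutator (H1 + H2) (a * F1 + b * F2) = - 2 * (a * F1 + b * F2)"
  proof -
    have "commutator (H1 + H2) (a * F1 + b * F2) = a * (- 2 * F1) + b * (- 2 * F2)"
      by (simp add: bracket)
    also have "\<dots> = - 2 * (a * F1 + b * F2)"
      by (simp add: algebra_simps mult_2 mult_2_right)
    finally show ?thesis .
  qed
  moreover have "commutator (E1 + E2) (a * F1 + b * F2) = 1"
    using \<open>a + b = 1\<close> by (simp add: bracket)
  ultimately show ?thesis
    by (simp add: osc_rel_iff_commutator)
qed

definition gf_vec :: "nat \<Rightarrow> complex poly \<Rightarrow> nat \<times> nat \<Rightarrow> complex" where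
  "gf_vec N G = (\<lambda>(n, m). if n + m = N then coeff G n else 0)"

definition DeltaF_poly :: "complex \<Rightarrow> nat \<Rightarrow> complex poly \<Rightarrow> complex poly" where
  "DeltaF_poly p N G = smult p (pderiv G) + smult (1 - p) (smult (of_nat N) G - pCons 0 (pderiv G))"

lemma gf_vec_smult: "gf_vec N (smult c G) = (\<lambda>x. c * gf_vec N G x)"
  by (auto simp: gf_vec_def)

lemma DeltaH_gf_vec:
  "DeltaH l1 l2 (gf_vec N G) = (\<lambda>x. (l1 + l2 + 2 * of_nat N) * gf_vec N G x)"
  by (auto simp: fun_eq_iff DeltaH_def tens_left_def tens_right_def oscH_def gf_vec_def algebra_simps)

lemma DeltaE_gf_vec:
  assumes "degree G \<le> N"
  shows "DeltaE (gf_vec N G) = gf_vec (Suc N) ([:1, 1:] * G)"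
proof -
  have "coeff G (Suc N) = 0"
    using assms by (simp add: coeff_eq_0)
  then show ?thesis
    by (auto simp: fun_eq_iff DeltaE_def tens_left_def tens_right_def oscE_def gf_vec_def
        coeff_pCons split: nat.split)
qed

lemma coeff_DeltaF_poly:
  "coeff (DeltaF_poly p N G) n
     = p * of_nat (Suc n) * coeff G (Suc n) + (1 - p) * (of_nat N - of_nat n) * coeff G n"
  by (cases n) (simp_all add: DeltaF_poly_def coeff_pderiv algebra_simps)

lemma DeltaF_gf_vec:
  assumes "degree G \<le> N"
  shows "DeltaF p (gf_vec N G) = (\<lambda>x. - gf_vec (N - 1) (DeltaF_poly p N G) x)"
proof (cases N)
  case 0
  then have "coeff G 1 = 0"
    using assms by (simp add: coeff_eq_0)
  with 0 show ?thesis
    by (auto simp: fun_eq_iff DeltaF_def tens_left_def tens_right_def oscF_def gf_vec_def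
        coeff_DeltaF_poly)
next
  case (Suc M)
  show ?thesis
  proof (rule ext, clarify)
    fix n m
    show "DeltaF p (gf_vec N G) (n, m) = - gf_vec (N - 1) (DeltaF_poly p N G) (n, m)"
    proof (cases "n + m = M")
      case True
      with Suc have "N = n + Suc m"
        by simp
      then have "(of_nat N - of_nat n :: complex) = of_nat (Suc m)"
        by simp
      with True Suc show ?thesis
        by (simp add: DeltaF_def tens_left_def tens_right_def oscF_def gf_vec_def
            coeff_DeltaF_poly algebra_simps)
    qed (use Suc in \<open>simp add: DeltaF_def tens_left_def tens_right_def oscF_def gf_vec_def\<close>)
  qed
qed

lemma pochhammer_minus_of_nat:
  "pochhammer (- of_nat n :: 'a::field_char_0) j = (- 1) ^ j * fact j * of_nat (n choose j)"
  by (simp add: binomial_gbinomial gbinomial_pochhammer)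

lemma Kraw_eq_binomial_sum:
  assumes "n \<le> N"
  shows "Kraw p n k N
    = (\<Sum>j\<le>min n k. of_nat (k choose j) * of_nat ((N - j) choose (n - j)) * (- inverse p) ^ j)"
  unfolding Kraw_def sum_distrib_left
proof (rule sum.cong[OF refl])
  fix j assume "j \<in> {..min n k}"
  then have "j \<le> n" "j \<le> N"
    using assms by auto
  have choose_N_j: "of_nat (N choose j) \<noteq> (0 :: complex)"
    using \<open>j \<le> N\<close> by simp
  have "((- 1) ^ j :: complex) * (- 1) ^ j = 1"
    by (simp flip: power_mult_distrib)
  with choose_N_j have "pochhammer (- of_nat n) j * pochhammer (- of_nat k) j
        / (fact j * pochhammer (- of_nat N) j)
      = (- 1) ^ j * of_nat (n choose j) * of_nat (k choose j) / (of_nat (N choose j) :: complex)"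
    unfolding pochhammer_minus_of_nat by (simp add: divide_simps)
  then have "of_nat (N choose n) * (pochhammer (- of_nat n) j * pochhammer (- of_nat k) j
        / (fact j * pochhammer (- of_nat N) j) * inverse p ^ j)
      = of_nat (N choose n) * of_nat (n choose j) * of_nat (k choose j) * (- inverse p) ^ j
        / of_nat (N choose j)"
    by (simp add: power_minus[of "inverse p"] mult_ac)
  also have "of_nat (N choose n) * of_nat (n choose j)
      = (of_nat (N choose j) * of_nat ((N - j) choose (n - j)) :: complex)"
    using \<open>j \<le> n\<close> assms by (simp flip: of_nat_mult add: choose_mult)
  finally show "of_nat (N choose n) * (pochhammer (- of_nat n) j * pochhammer (- of_nat k) j
        / (fact j * pochhammer (- of_nat N) j) * inverse p ^ j)
      = of_nat (k choose j) * of_nat ((N - j) choose (n - j)) * (- inverse p) ^ j"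
    using choose_N_j by simp
qed

lemma coeff_one_plus_X_power: "coeff ([:1, 1:] ^ m :: 'a::comm_semiring_1 poly) i = of_nat (m choose i)"
proof (cases "i \<le> m")
  case False
  then show ?thesis
    using degree_linear_power[of "1 :: 'a" m] by (simp add: coeff_eq_0 binomial_eq_0)
qed (simp add: coeff_linear_poly_power)

definition krawtchouk_gf :: "complex \<Rightarrow> nat \<Rightarrow> nat \<Rightarrow> complex poly" where
  "krawtchouk_gf p k N = [:1, 1:] ^ (N - k) * [:1, 1 - inverse p:] ^ k"

lemma degree_krawtchouk_gf:
  assumes "k \<le> N"
  shows "degree (krawtchouk_gf p k N) \<le> N"
proof -
  have linear_power: "degree ([:1, c:] ^ j :: complex poly) \<le> j" for c j
    using degree_power_le[of "[:1, c:]" j] by (simp add: order_trans)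
  have "degree (krawtchouk_gf p k N)
      \<le> degree ([:1, 1:] ^ (N - k) :: complex poly) + degree ([:1, 1 - inverse p:] ^ k)"
    unfolding krawtchouk_gf_def by (fact degree_mult_le)
  also have "\<dots> \<le> (N - k) + k"
    by (intro add_mono linear_power)
  finally show ?thesis
    using assms by simp
qed

lemma coeff_krawtchouk_gf:
  assumes "k \<le> N"
  shows "coeff (krawtchouk_gf p k N) n
    = (\<Sum>j\<le>min n k. of_nat (k choose j) * of_nat ((N - j) choose (n - j)) * (- inverse p) ^ j)"
proof -
  let ?r = "- inverse p" and ?u = "[:1, 1:] :: complex poly"
  have v: "[:1, 1 - inverse p:] = monom ?r 1 + ?u"
    by (simp add: monom_Suc monom_0)
  have "krawtchouk_gf p k N
      = ?u ^ (N - k) * (\<Sum>j\<le>k. of_nat (k choose j) * monom ?r 1 ^ j * ?u ^ (k - j))"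
    unfolding krawtchouk_gf_def v binomial_ring ..
  also have "\<dots> = (\<Sum>j\<le>k. smult (of_nat (k choose j)) (monom (?r ^ j) j * ?u ^ (N - j)))"
    unfolding sum_distrib_left
  proof (rule sum.cong[OF refl])
    fix j assume "j \<in> {..k}"
    with assms have "?u ^ (N - j) = ?u ^ (N - k) * ?u ^ (k - j)"
      by (simp flip: power_add)
    then show "?u ^ (N - k) * (of_nat (k choose j) * monom ?r 1 ^ j * ?u ^ (k - j))
        = smult (of_nat (k choose j)) (monom (?r ^ j) j * ?u ^ (N - j))"
      by (simp add: monom_power of_nat_poly algebra_simps)
  qed
  finally have "coeff (krawtchouk_gf p k N) n
      = (\<Sum>j\<le>k. of_nat (k choose j) * (if n < j then 0 else ?r ^ j * of_nat ((N - j) choose (n - j))))"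
    by (simp add: coeff_sum coeff_monom_mult coeff_one_plus_X_power cong: if_cong)
  also have "\<dots> = (\<Sum>j\<le>min n k. of_nat (k choose j) * of_nat ((N - j) choose (n - j)) * ?r ^ j)"
    by (rule sum.mono_neutral_cong_right) auto
  finally show ?thesis .
qed

lemma wvec_eq_gf_vec:
  assumes "k \<le> N"
  shows "wvec p k N = gf_vec N (krawtchouk_gf p k N)"
  using assms
  by (auto simp: fun_eq_iff wvec_def gf_vec_def Kraw_eq_binomial_sum coeff_krawtchouk_gf)

lemma krawtchouk_gf_Suc:
  "k \<le> N \<Longrightarrow> krawtchouk_gf p k (Suc N) = [:1, 1:] * krawtchouk_gf p k N"
  by (simp only: krawtchouk_gf_def Suc_diff_le power_Suc mult.assoc)

lemma mult_pderiv_power: "q * pderiv (q ^ n) = smult (of_nat n) (q ^ n * pderiv q)"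
proof (cases n)
  case (Suc m)
  have "q * pderiv (q ^ Suc m) = q * (smult (of_nat (Suc m)) (q ^ m) * pderiv q)"
    by (simp only: pderiv_power_Suc)
  with Suc show ?thesis
    by (simp add: algebra_simps)
qed simp

lemma DeltaF_poly_krawtchouk_gf:
  assumes "p \<noteq> 0" and "k \<le> N"
  shows "DeltaF_poly p N (krawtchouk_gf p k N) = smult (of_nat (N - k)) (krawtchouk_gf p k (N - 1))"
proof -
  define c where "c = 1 - inverse p"
  define u where "u = ([:1, 1:] :: complex poly)"
  define v where "v = [:1, c:]"
  define a where "a = N - k"
  define G where "G = krawtchouk_gf p k N"
  have G: "G = u ^ a * v ^ k"
    by (simp add: G_def krawtchouk_gf_def u_def v_def c_def a_def)
  have pc: "p * c = p - 1"
    using assms(1) by (simp add: c_def field_simps)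
  have N: "(of_nat N :: complex) = of_nat a + of_nat k"
    using assms(2) by (simp add: a_def)
  \<comment> \<open>\<open>p - (1 - p) x = p v\<close> turns the operator into \<open>p v d/dx + (1 - p) N\<close>\<close>
  have "smult p v = [:p, p - 1:]"
    using pc by (simp add: v_def)
  then have "DeltaF_poly p N G = smult p (v * pderiv G) + smult ((1 - p) * of_nat N) G"
    by (simp add: DeltaF_poly_def smult_add_right smult_diff_right
        flip: mult_smult_left smult_minus_left)
  also have "v * pderiv G = pderiv (u ^ a) * v ^ Suc k + smult (of_nat k * c) G"
    by (simp add: G pderiv_mult mult_pderiv_power v_def pderiv_pCons algebra_simps)
  also have "smult p (pderiv (u ^ a) * v ^ Suc k + smult (of_nat k * c) G)
        + smult ((1 - p) * of_nat N) G
      = smult p (pderiv (u ^ a) * v ^ Suc k) + smult (p * (of_nat k * c) + (1 - p) * of_nat N) G"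
    by (simp add: smult_add_right smult_add_left)
  also have "p * (of_nat k * c) + (1 - p) * of_nat N = (1 - p) * of_nat a"
    using pc N by algebra
  finally have DeltaF_G:
    "DeltaF_poly p N G = smult p (pderiv (u ^ a) * v ^ Suc k) + smult ((1 - p) * of_nat a) G" .
  show ?thesis
  proof (cases a)
    case 0
    then show ?thesis
      using DeltaF_G by (simp add: G_def a_def)
  next
    case (Suc b)
    have "N - 1 - k = b"
      using Suc by (simp add: a_def)
    then have lowered: "krawtchouk_gf p k (N - 1) = u ^ b * v ^ k"
      by (simp add: krawtchouk_gf_def u_def v_def c_def)
    have "pderiv u = 1"
      by (simp add: u_def pderiv_pCons)
    then have "pderiv (u ^ a) = smult (of_nat a) (u ^ b)"
      unfolding Suc pderiv_power_Suc by simp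
    with DeltaF_G
    have "DeltaF_poly p N G = smult (of_nat a) (u ^ b * v ^ k * (smult p v + smult (1 - p) u))"
      by (simp add: G Suc smult_add_right algebra_simps)
    also have "smult p v + smult (1 - p) u = 1"
      by (simp add: u_def v_def pc)
    finally show ?thesis
      using lowered by (simp add: G_def a_def)
  qed
qed

theorem mainTheorem2:
  fixes p :: complex
  assumes "p \<noteq> 0"
  shows "(\<forall>(emb :: complex \<Rightarrow> 'b::ring_1) H1 E1 F1 H2 E2 F2.
            cplx_alg emb \<and> osc_rel H1 E1 F1 \<and> osc_rel H2 E2 F2 \<and>
            commute_all [H1, E1, F1] [H2, E2, F2] \<longrightarrow>
            osc_rel (H1 + H2) (E1 + E2) (emb p * F1 + emb (1 - p) * F2))
    \<and> (\<forall>l1 l2 :: complex. \<forall>k N :: nat. k \<le> N \<longrightarrow>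
          DeltaH l1 l2 (wvec p k N) = (\<lambda>x. (l1 + l2 + 2 * of_nat N) * wvec p k N x)
        \<and> DeltaE (wvec p k N) = wvec p k (N + 1)
        \<and> DeltaF p (wvec p k N) =
            (if k < N then (\<lambda>x. - of_nat (N - k) * wvec p k (N - 1) x) else (\<lambda>x. 0)))"
proof (intro conjI allI impI; (elim conjE)?)
  fix emb :: "complex \<Rightarrow> 'b::ring_1" and H1 E1 F1 H2 E2 F2 :: 'b
  assume emb: "cplx_alg emb" and rels: "osc_rel H1 E1 F1" "osc_rel H2 E2 F2"
    "commute_all [H1, E1, F1] [H2, E2, F2]"
  have "emb p + emb (1 - p) = emb (p + (1 - p))"
    using emb unfolding cplx_alg_def by metis
  also have "\<dots> = 1"
    using emb by (simp add: cplx_alg_def)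
  finally have sum_one: "emb p + emb (1 - p) = 1" .
  have central: "emb a * x = x * emb a" for a x
    using emb by (simp add: cplx_alg_def)
  show "osc_rel (H1 + H2) (E1 + E2) (emb p * F1 + emb (1 - p) * F2)"
    by (rule osc_rel_coproduct[OF rels central central sum_one])
next
  fix l1 l2 :: complex and k N :: nat
  assume "k \<le> N"
  note w = wvec_eq_gf_vec[OF \<open>k \<le> N\<close>] and degree = degree_krawtchouk_gf[OF \<open>k \<le> N\<close>]
  show "DeltaH l1 l2 (wvec p k N) = (\<lambda>x. (l1 + l2 + 2 * of_nat N) * wvec p k N x)"
    by (simp add: w DeltaH_gf_vec)
  show "DeltaE (wvec p k N) = wvec p k (N + 1)"
    using \<open>k \<le> N\<close> by (simp add: w DeltaE_gf_vec[OF degree] wvec_eq_gf_vec krawtchouk_gf_Suc)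
  have "DeltaF p (wvec p k N)
      = (\<lambda>x. - of_nat (N - k) * gf_vec (N - 1) (krawtchouk_gf p k (N - 1)) x)"
    unfolding w DeltaF_gf_vec[OF degree] DeltaF_poly_krawtchouk_gf[OF assms \<open>k \<le> N\<close>] gf_vec_smult
    by simp
  then show "DeltaF p (wvec p k N)
      = (if k < N then (\<lambda>x. - of_nat (N - k) * wvec p k (N - 1) x) else (\<lambda>x. 0))"
    using \<open>k \<le> N\<close> by (simp add: wvec_eq_gf_vec)
qed

end
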